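(* Let $x,y>0$ and $r,s\in\mathbb{R}$, and let $F_{r,s;x,y}(w)=E(r+w,s+w;x,y)$ for $w\in\mathbb{R}$. If $s+r>0$, then the function $w\mapsto w\ln F_{r,s;x,y}(w)$ is convex on $\bigl(-\frac{s+r}{2},0\bigr)$. If $s+r<0$, then $w\mapsto w\ln F_{r,s;x,y}(w)$ is convex on $\bigl(0,-\frac{s+r}{2}\bigr)$.
   Context: For $x,y>0$ and $r,s\in\mathbb{R}$ the extended mean values are defined by $E(r,s;x,y)=\bigl(\frac{r}{s}\cdot\frac{y^s-x^s}{y^r-x^r}\bigr)^{1/(s-r)}$ if $rs(r-s)(x-y)\neq0$; $E(r,0;x,y)=E(0,r;x,y)=\bigl(\frac1r\cdot\frac{y^r-x^r}{\ln y-\ln x}\bigr)^{1/r}$ if $r(x-y)\neq0$; $E(r,r;x,y)=e^{-1/r}\bigl(\frac{x^{x^r}}{y^{y^r}}\bigr)^{1/(x^r-y^r)}$ if $r(x-y)\neq0$; $E(0,0;x,y)=\sqrt{xy}$ if $x\neq y$; $E(r,s;x,x)=x$. *)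

theory Defs
  imports "HOL-Analysis.Analysis"
begin

definition ext_mean :: "real \<Rightarrow> real \<Rightarrow> real \<Rightarrow> real \<Rightarrow> real" where
  "ext_mean r s x y =
    (if x = y then x
     else if r \<noteq> 0 \<and> s \<noteq> 0 \<and> r \<noteq> s then
       ((r / s) * ((y powr s - x powr s) / (y powr r - x powr r))) powr (1 / (s - r))
     else if r \<noteq> 0 \<and> s = 0 then
       ((1 / r) * ((y powr r - x powr r) / (ln y - ln x))) powr (1 / r)
     else if r = 0 \<and> s \<noteq> 0 then
       ((1 / s) * ((y powr s - x powr s) / (ln y - ln x))) powr (1 / s)
     else if r = s \<and> r \<noteq> 0 then
       exp (- 1 / r) * ((x powr (x powr r)) / (y powr (y powr r))) powr (1 / (x powr r - y powr r))
     else sqrt (x * y))"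

end

theory Submission
  imports Defs "HOL-Real_Asymp.Real_Asymp"
begin

(*
  Write x = e^a, y = e^b, m = (a+b)/2, d = (b-a)/2.  The cumulant generating function of the
  uniform distribution on [a,b],
      K(t) = ln ((e^(t b) - e^(t a)) / (t (b - a))) = t m + G(d t),   G(u) = ln (sinh u / u),
  turns the extended mean into a divided difference:  ln E(p,q;x,y) = (K(q) - K(p)) / (q - p)
  (and K'(p) if p = q).  Hence  w ln F(w) = w [K(s+w) - K(r+w)] / (s - r).

  The proof has three parts.
  (1) The kernel G: its derivatives G', G'' (with removable singularities at 0), and the facts
      G'' >= 0 and G'' antitone in |u|; the latter reduces to cosh u <= (sinh u / u)^3.
  (2) An abstract convexity result: for any S whose second derivative S'' is nonnegative and
      antitone in |t|, the map w \<mapsto> w * divdiff S (r+w) (s+w) is convex on the intervals of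
      the theorem.  Its second derivative is 2 * divdiff S' + w * divdiff S'', and the sign of the
      second divided difference is controlled by the position of (r+w)+(s+w) relative to 0.
  (3) The representation of ln E as a divided difference of K, followed by the theorem.
*)

section \<open>The kernel \<open>G(u) = ln (sinh u / u)\<close>\<close>

definition log_sinhc :: "real \<Rightarrow> real" where
  "log_sinhc u = (if u = 0 then 0 else ln (sinh u / u))"

definition log_sinhc_d1 :: "real \<Rightarrow> real" where
  "log_sinhc_d1 u = (if u = 0 then 0 else cosh u / sinh u - 1 / u)"

definition log_sinhc_d2 :: "real \<Rightarrow> real" where
  "log_sinhc_d2 u = (if u = 0 then 1/3 else 1 / u\<^sup>2 - 1 / (sinh u)\<^sup>2)"

lemma sinhc_pos: "u \<noteq> 0 \<Longrightarrow> sinh u / (u::real) > 0"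
  by (cases "u > 0") (auto simp: divide_pos_pos divide_neg_neg)

lemma has_real_derivative_off_zero:
  assumes "(f has_real_derivative D) (at u)" "u \<noteq> 0" "\<And>v. v \<noteq> 0 \<Longrightarrow> g v = f v"
  shows "(g has_real_derivative D) (at u)"
  using assms(1)
  by (rule has_field_derivative_transform_within_open[where S="-{0}"]) (use assms(2,3) in auto)

lemma log_sinhc_deriv: "(log_sinhc has_real_derivative log_sinhc_d1 u) (at u)"
proof (cases "u = 0")
  case True
  have "((\<lambda>v::real. ln (sinh v / v) / v) \<longlongrightarrow> 0) (at 0)" by real_asymp
  then have "((\<lambda>v. (log_sinhc v - log_sinhc 0) / (v - 0)) \<longlongrightarrow> 0) (at 0)"
    by (rule Lim_transform_eventually) (auto simp: log_sinhc_def eventually_at_filter)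
  then show ?thesis using True by (simp add: has_field_derivative_iff log_sinhc_d1_def)
next
  case False
  have pos: "sinh u / u > 0" using sinhc_pos[OF False] .
  have "((\<lambda>v. ln (sinh v / v)) has_real_derivative
      ((cosh u * u - sinh u * 1) / (u * u)) / (sinh u / u)) (at u)"
    using pos False by (auto intro!: derivative_eq_intros)
  also have "((cosh u * u - sinh u * 1) / (u * u)) / (sinh u / u) = log_sinhc_d1 u"
    using False pos by (auto simp: log_sinhc_d1_def field_simps)
  finally show ?thesis
    by (rule has_real_derivative_off_zero) (use False in \<open>auto simp: log_sinhc_def\<close>)
qed

lemma log_sinhc_d1_deriv: "(log_sinhc_d1 has_real_derivative log_sinhc_d2 u) (at u)"
proof (cases "u = 0")
  case True
  have "((\<lambda>v::real. (cosh v / sinh v - 1/v) / v) \<longlongrightarrow> 1/3) (at 0)" by real_asymp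
  then have "((\<lambda>v. (log_sinhc_d1 v - log_sinhc_d1 0) / (v - 0)) \<longlongrightarrow> 1/3) (at 0)"
    by (rule Lim_transform_eventually) (auto simp: log_sinhc_d1_def eventually_at_filter)
  then show ?thesis using True by (simp add: has_field_derivative_iff log_sinhc_d2_def)
next
  case False
  have s: "sinh u \<noteq> 0" using False by simp
  have "((\<lambda>v. cosh v / sinh v - 1 / v) has_real_derivative
      (sinh u * sinh u - cosh u * cosh u) / (sinh u * sinh u) + 1 / (u * u)) (at u)"
    using s False by (auto intro!: derivative_eq_intros simp: power2_eq_square)
  also have "(sinh u * sinh u - cosh u * cosh u) / (sinh u * sinh u) + 1 / (u * u)
      = log_sinhc_d2 u"
    using False s cosh_square_eq[of u] by (auto simp: log_sinhc_d2_def field_simps power2_eq_square)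
  finally show ?thesis
    by (rule has_real_derivative_off_zero) (use False in \<open>auto simp: log_sinhc_d1_def\<close>)
qed

lemma log_sinhc_d2_deriv:
  assumes "u \<noteq> 0"
  shows "(log_sinhc_d2 has_real_derivative 2 * cosh u / (sinh u)^3 - 2 / u^3) (at u)"
proof -
  have "sinh u \<noteq> 0" using assms by simp
  then have "((\<lambda>v. 1 / v\<^sup>2 - 1 / (sinh v)\<^sup>2) has_real_derivative
      2 * cosh u / (sinh u)^3 - 2 / u^3) (at u)"
    using assms by (auto intro!: derivative_eq_intros simp: field_simps power2_eq_square power3_eq_cube)
  then show ?thesis
    by (rule has_real_derivative_off_zero) (use assms in \<open>auto simp: log_sinhc_d2_def\<close>)
qed

lemma log_sinhc_d2_isCont: "isCont log_sinhc_d2 u"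
proof (cases "u = 0")
  case True
  have "((\<lambda>v::real. 1 / v\<^sup>2 - 1 / (sinh v)\<^sup>2) \<longlongrightarrow> 1/3) (at 0)" by real_asymp
  then have "(log_sinhc_d2 \<longlongrightarrow> 1/3) (at 0)"
    by (rule Lim_transform_eventually) (auto simp: log_sinhc_d2_def eventually_at_filter)
  then show ?thesis using True by (simp add: isCont_def log_sinhc_d2_def)
qed (use log_sinhc_d2_deriv DERIV_isCont in blast)

lemma log_sinhc_d2_even: "log_sinhc_d2 (- u) = log_sinhc_d2 u"
  by (simp add: log_sinhc_d2_def)

text \<open>\<open>G'' \<ge> 0\<close>, i.e. \<open>|u| \<le> |sinh u|\<close>; so \<open>G'\<close> is nondecreasing.\<close>
lemma log_sinhc_d2_nonneg: "log_sinhc_d2 u \<ge> 0"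
proof (cases "u = 0")
  case False
  have "\<bar>u\<bar> \<le> \<bar>sinh u\<bar>"
    using real_le_abs_sinh[of u] by (simp add: sinh_def exp_minus)
  then have "u\<^sup>2 \<le> (sinh u)\<^sup>2" by (metis abs_le_square_iff)
  then show ?thesis using False by (simp add: log_sinhc_d2_def divide_simps)
qed (simp add: log_sinhc_d2_def)

lemma nonneg_if_deriv_nonneg:
  fixes f f' :: "real \<Rightarrow> real"
  assumes "\<And>t. (f has_real_derivative f' t) (at t)" "\<And>t. t > 0 \<Longrightarrow> f' t \<ge> 0" "f 0 = 0" "v \<ge> 0"
  shows "f v \<ge> 0"
proof -
  have "f 0 \<le> f v"
  proof (rule DERIV_nonneg_imp_increasing_open[OF \<open>v \<ge> 0\<close>])
    show "continuous_on {0..v} f"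
      by (meson DERIV_isCont assms(1) continuous_at_imp_continuous_on)
  qed (use assms in auto)
  with assms show ?thesis by simp
qed

text \<open>Three successive integrations, each derivative being the previous function.\<close>
lemma hyperbolic_ineq_1: "v \<ge> 0 \<Longrightarrow> v * cosh v - sinh v \<ge> (0::real)"
  by (rule nonneg_if_deriv_nonneg[where f="\<lambda>v. v * cosh v - sinh v" and f'="\<lambda>t. t * sinh t"])
     (auto intro!: derivative_eq_intros)

lemma hyperbolic_ineq_2: "v \<ge> 0 \<Longrightarrow> v * sinh v - 2 * cosh v + 2 \<ge> (0::real)"
proof (rule nonneg_if_deriv_nonneg[where f="\<lambda>v. v * sinh v - 2 * cosh v + 2"
      and f'="\<lambda>t. t * cosh t - sinh t"])
  show "t * cosh t - sinh t \<ge> 0" if "t > 0" for t :: real using hyperbolic_ineq_1[of t] that by simp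
qed (auto intro!: derivative_eq_intros)

lemma hyperbolic_ineq_3: "v \<ge> 0 \<Longrightarrow> v * (cosh v + 2) - 3 * sinh v \<ge> (0::real)"
proof (rule nonneg_if_deriv_nonneg[where f="\<lambda>v. v * (cosh v + 2) - 3 * sinh v"
      and f'="\<lambda>t. t * sinh t - 2 * cosh t + 2"])
  show "t * sinh t - 2 * cosh t + 2 \<ge> 0" if "t > 0" for t :: real using hyperbolic_ineq_2[of t] that by simp
qed (auto intro!: derivative_eq_intros simp: algebra_simps)

text \<open>By the double-angle formulas the last inequality says \<open>G'(u) \<ge> tanh u / 3\<close> for \<open>u > 0\<close>.\<close>
lemma log_sinhc_d1_ge_tanh:
  fixes u :: real
  assumes "u > 0" shows "log_sinhc_d1 u \<ge> sinh u / cosh u / 3"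
proof -
  have "(2*u) * (cosh (2*u) + 2) - 3 * sinh (2*u) \<ge> 0"
    using hyperbolic_ineq_3[of "2*u"] assms by simp
  then have num: "3*u*(cosh u)\<^sup>2 - 3 * sinh u * cosh u - u * (sinh u)\<^sup>2 \<ge> 0"
    unfolding cosh_double sinh_double using cosh_square_eq[of u] by (simp add: algebra_simps)
  have sc: "sinh u > 0" "cosh u > 0" using assms by auto
  have "log_sinhc_d1 u - sinh u / cosh u / 3
      = (3*u*(cosh u)\<^sup>2 - 3 * sinh u * cosh u - u * (sinh u)\<^sup>2) / (3 * u * sinh u * cosh u)"
    using assms sc by (simp add: log_sinhc_d1_def field_simps power2_eq_square)
  also have "\<dots> \<ge> 0" using num sc assms by (intro divide_nonneg_pos) auto
  finally show ?thesis by simp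
qed

text \<open>Integrating: \<open>G(u) \<ge> ln (cosh u) / 3\<close>.\<close>
lemma cosh_le_sinhc_cube:
  fixes u :: real
  assumes "u > 0" shows "cosh u \<le> (sinh u / u)^3"
proof -
  have deriv: "((\<lambda>z. log_sinhc z - ln (cosh z) / 3) has_real_derivative
      log_sinhc_d1 t - sinh t / cosh t / 3) (at t)" for t
    by (auto intro!: derivative_eq_intros log_sinhc_deriv)
  have "log_sinhc u - ln (cosh u) / 3 \<ge> 0"
    by (rule nonneg_if_deriv_nonneg[OF deriv])
       (use assms log_sinhc_d1_ge_tanh in \<open>auto simp: log_sinhc_def\<close>)
  then have "ln (cosh u) \<le> ln ((sinh u / u)^3)"
    using assms by (simp add: log_sinhc_def ln_realpow)
  then show ?thesis using assms by (subst (asm) ln_le_cancel_iff) auto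
qed

text \<open>Hence \<open>G''' \<le> 0\<close> on the positive axis, and by evenness \<open>G''\<close> is antitone in \<open>|u|\<close>.\<close>
lemma log_sinhc_d2_antitone:
  assumes "0 \<le> u" "u \<le> v" shows "log_sinhc_d2 v \<le> log_sinhc_d2 u"
proof (rule DERIV_nonpos_imp_decreasing_open[OF assms(2)])
  show "continuous_on {u..v} log_sinhc_d2"
    by (simp add: continuous_at_imp_continuous_on log_sinhc_d2_isCont)
next
  fix t assume "u < t" "t < v"
  then have t: "t > 0" using assms by simp
  have "cosh t * t^3 \<le> (sinh t)^3" using cosh_le_sinhc_cube[OF t] t by (simp add: field_simps)
  then have "2 * cosh t / (sinh t)^3 - 2 / t^3 \<le> 0"
    using t by (simp add: field_simps)
  with log_sinhc_d2_deriv[of t] t show "\<exists>D. DERIV log_sinhc_d2 t :> D \<and> D \<le> 0" by auto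
qed

lemma log_sinhc_d2_antitone_abs:
  assumes "\<bar>u\<bar> \<le> \<bar>v\<bar>" shows "log_sinhc_d2 v \<le> log_sinhc_d2 u"
proof -
  have abs_eq: "log_sinhc_d2 \<bar>z\<bar> = log_sinhc_d2 z" for z
    by (cases "z \<ge> 0") (auto simp: log_sinhc_d2_even)
  show ?thesis using log_sinhc_d2_antitone[OF abs_ge_zero assms] by (simp add: abs_eq)
qed

section \<open>Convexity of \<open>w \<mapsto> w \<cdot> S[r+w, s+w]\<close>\<close>

definition divdiff :: "(real \<Rightarrow> real) \<Rightarrow> (real \<Rightarrow> real) \<Rightarrow> real \<Rightarrow> real \<Rightarrow> real" where
  "divdiff S S' p q = (if p = q then S' p else (S q - S p) / (q - p))"

context
  fixes S S1 S2 :: "real \<Rightarrow> real"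
  assumes deriv1: "\<And>t. (S has_real_derivative S1 t) (at t)"
    and deriv2: "\<And>t. (S1 has_real_derivative S2 t) (at t)"
    and S2_nonneg: "\<And>t. S2 t \<ge> 0"
    and S2_antitone_abs: "\<And>u v. \<bar>u\<bar> \<le> \<bar>v\<bar> \<Longrightarrow> S2 v \<le> S2 u"
begin

lemma S1_mono: "u \<le> v \<Longrightarrow> S1 u \<le> S1 v"
  by (rule DERIV_nonneg_imp_increasing_open)
     (use deriv2 S2_nonneg in \<open>auto intro: continuous_at_imp_continuous_on DERIV_isCont\<close>)

lemma divdiff_S1_nonneg: "(S1 q - S1 p) / (q - p) \<ge> 0"
  using S1_mono[of p q] S1_mono[of q p]
  by (cases "p \<le> q") (auto simp: divide_nonneg_nonneg divide_nonpos_neg)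

lemma divdiff_S2_sign:
  "p + q > 0 \<Longrightarrow> (S2 q - S2 p) / (q - p) \<le> 0"
  "p + q < 0 \<Longrightarrow> (S2 q - S2 p) / (q - p) \<ge> 0"
  using S2_antitone_abs[of p q] S2_antitone_abs[of q p]
  by (cases p q rule: linorder_cases;
      force simp: divide_nonpos_pos divide_nonneg_neg divide_nonneg_pos divide_nonpos_neg)+

text \<open>Off the diagonal, \<open>(w \<cdot> S[r+w,s+w])'' = 2 S'[r+w,s+w] + w S''[r+w,s+w]\<close>.\<close>
lemma convex_off_diagonal:
  assumes "r \<noteq> s"
    and sgn: "\<And>w. w \<in> I \<Longrightarrow> w * ((S2 (s+w) - S2 (r+w)) / ((s+w) - (r+w))) \<ge> 0"
    and "convex I"
  shows "convex_on I (\<lambda>w. w * divdiff S S1 (r+w) (s+w))"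
proof -
  define k where "k = 1 / (s - r)"
  have eq: "(\<lambda>w. w * divdiff S S1 (r+w) (s+w)) = (\<lambda>w. w * (S (s+w) - S (r+w)) * k)"
    using assms by (simp add: divdiff_def k_def)
  show ?thesis unfolding eq
  proof (rule f''_ge0_imp_convex[OF \<open>convex I\<close>])
    show "((\<lambda>w. w * (S (s+w) - S (r+w)) * k) has_real_derivative
       ((S (s+w) - S (r+w)) + w * (S1 (s+w) - S1 (r+w))) * k) (at w)" for w
      by (auto intro!: derivative_eq_intros DERIV_chain2[OF deriv1] simp: algebra_simps)
    show "((\<lambda>w. ((S (s+w) - S (r+w)) + w * (S1 (s+w) - S1 (r+w))) * k) has_real_derivative
       (2 * (S1 (s+w) - S1 (r+w)) + w * (S2 (s+w) - S2 (r+w))) * k) (at w)" for w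
      by (auto intro!: derivative_eq_intros DERIV_chain2[OF deriv1] DERIV_chain2[OF deriv2]
          simp: algebra_simps)
    fix w assume "w \<in> I"
    have diff: "(s+w) - (r+w) = s - r" by simp
    have "(S1 (s+w) - S1 (r+w)) / (s - r) \<ge> 0"
      using divdiff_S1_nonneg[of "s+w" "r+w"] unfolding diff .
    moreover have "w * ((S2 (s+w) - S2 (r+w)) / (s - r)) \<ge> 0"
      using sgn[OF \<open>w \<in> I\<close>] unfolding diff .
    moreover have "(2 * (S1 (s+w) - S1 (r+w)) + w * (S2 (s+w) - S2 (r+w))) * k
       = 2 * ((S1 (s+w) - S1 (r+w)) / (s - r)) + w * ((S2 (s+w) - S2 (r+w)) / (s - r))"
      by (simp add: k_def divide_inverse algebra_simps)
    ultimately show "(2 * (S1 (s+w) - S1 (r+w)) + w * (S2 (s+w) - S2 (r+w))) * k \<ge> 0"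
      by linarith
  qed
qed

text \<open>On the diagonal the function is \<open>w \<cdot> S'(r+w)\<close> with derivative \<open>S'(r+w) + w S''(r+w)\<close>,
  which is nondecreasing as long as \<open>w\<close> and \<open>r+w\<close> have opposite signs.\<close>
lemma diagonal_deriv:
  "((\<lambda>w. w * divdiff S S1 (r + w) (r + w)) has_real_derivative S1 (r + w) + w * S2 (r + w)) (at w)"
  unfolding divdiff_def by (auto intro!: derivative_eq_intros DERIV_chain2[OF deriv2])

lemma convex_diagonal_pos:
  assumes "r > 0" shows "convex_on {-r<..<0} (\<lambda>w. w * divdiff S S1 (r+w) (r+w))"
proof (rule convex_on_realI[where f'="\<lambda>w. S1 (r + w) + w * S2 (r + w)"])
  fix x y assume xy: "x \<in> {-r<..<0}" "y \<in> {-r<..<0}" "x \<le> y"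
  have "S1 (r + x) \<le> S1 (r + y)" using xy by (intro S1_mono) simp
  moreover have "x * S2 (r + x) \<le> x * S2 (r + y)"
    using xy S2_antitone_abs[of "r+x" "r+y"] by (intro mult_left_mono_neg) auto
  moreover have "x * S2 (r + y) \<le> y * S2 (r + y)" using S2_nonneg xy by (intro mult_right_mono) auto
  ultimately show "S1 (r + x) + x * S2 (r + x) \<le> S1 (r + y) + y * S2 (r + y)" by linarith
qed (use diagonal_deriv[of r] in \<open>auto simp: divdiff_def\<close>)

lemma convex_diagonal_neg:
  assumes "r < 0" shows "convex_on {0<..<-r} (\<lambda>w. w * divdiff S S1 (r+w) (r+w))"
proof (rule convex_on_realI[where f'="\<lambda>w. S1 (r + w) + w * S2 (r + w)"])
  fix x y assume xy: "x \<in> {0<..<-r}" "y \<in> {0<..<-r}" "x \<le> y"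
  have "S1 (r + x) \<le> S1 (r + y)" using xy by (intro S1_mono) simp
  moreover have "x * S2 (r + x) \<le> y * S2 (r + x)" using S2_nonneg xy by (intro mult_right_mono) auto
  moreover have "y * S2 (r + x) \<le> y * S2 (r + y)"
    using xy S2_antitone_abs[of "r+y" "r+x"] by (intro mult_left_mono) auto
  ultimately show "S1 (r + x) + x * S2 (r + x) \<le> S1 (r + y) + y * S2 (r + y)" by linarith
qed (use diagonal_deriv[of r] in \<open>auto simp: divdiff_def\<close>)

theorem convex_shifted_divdiff:
  "(s + r > 0 \<longrightarrow> convex_on {- (s + r) / 2 <..< 0} (\<lambda>w. w * divdiff S S1 (r+w) (s+w)))
 \<and> (s + r < 0 \<longrightarrow> convex_on {0 <..< - (s + r) / 2} (\<lambda>w. w * divdiff S S1 (r+w) (s+w)))"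
proof (cases "r = s")
  case True
  then show ?thesis using convex_diagonal_pos[of s] convex_diagonal_neg[of s] by auto
next
  case False
  have "convex_on {- (s + r) / 2 <..< 0} (\<lambda>w. w * divdiff S S1 (r+w) (s+w))" if "s + r > 0"
  proof (rule convex_off_diagonal[OF False])
    fix w :: real assume w: "w \<in> {- (s + r) / 2 <..< 0}"
    then have "(S2 (s+w) - S2 (r+w)) / ((s+w) - (r+w)) \<le> 0" by (intro divdiff_S2_sign(1)) auto
    with w show "0 \<le> w * ((S2 (s+w) - S2 (r+w)) / ((s+w) - (r+w)))"
      by (intro mult_nonpos_nonpos) auto
  qed simp
  moreover have "convex_on {0 <..< - (s + r) / 2} (\<lambda>w. w * divdiff S S1 (r+w) (s+w))" if "s + r < 0"
  proof (rule convex_off_diagonal[OF False])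
    fix w :: real assume w: "w \<in> {0 <..< - (s + r) / 2}"
    then have "(S2 (s+w) - S2 (r+w)) / ((s+w) - (r+w)) \<ge> 0" by (intro divdiff_S2_sign(2)) auto
    with w show "0 \<le> w * ((S2 (s+w) - S2 (r+w)) / ((s+w) - (r+w)))"
      by (intro mult_nonneg_nonneg) auto
  qed simp
  ultimately show ?thesis by blast
qed

end

section \<open>The extended mean as a divided difference\<close>

text \<open>The cumulant generating function of the uniform distribution on \<open>[a,b]\<close>,
  \<open>K(t) = ln ((e^(tb) - e^(ta)) / (t(b-a)))\<close>, written via the kernel \<open>G\<close>.\<close>
definition unif_cgf :: "real \<Rightarrow> real \<Rightarrow> real \<Rightarrow> real" where
  "unif_cgf a b t = t * ((a + b) / 2) + log_sinhc ((b - a) / 2 * t)"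

definition unif_cgf_d1 :: "real \<Rightarrow> real \<Rightarrow> real \<Rightarrow> real" where
  "unif_cgf_d1 a b t = (a + b) / 2 + (b - a) / 2 * log_sinhc_d1 ((b - a) / 2 * t)"

lemma unif_cgf_0 [simp]: "unif_cgf a b 0 = 0"
  by (simp add: unif_cgf_def log_sinhc_def)

lemma powr_diff_eq_unif_cgf:
  assumes "a \<noteq> b" "t \<noteq> 0"
  shows "exp b powr t - exp a powr t = t * (b - a) * exp (unif_cgf a b t)"
proof -
  define m d where "m = (a + b) / 2" and "d = (b - a) / 2"
  have dt: "d * t \<noteq> 0" using assms by (simp add: d_def)
  have "exp (log_sinhc (d * t)) = sinh (d * t) / (d * t)"
    using sinhc_pos[OF dt] dt by (simp add: log_sinhc_def)
  then have "exp (unif_cgf a b t) = exp (t * m) * (sinh (d * t) / (d * t))"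
    by (simp add: unif_cgf_def exp_add m_def d_def mult.commute)
  moreover have "exp b powr t = exp (t * m) * exp (d * t)" "exp a powr t = exp (t * m) * exp (- (d * t))"
    by (simp_all add: powr_def exp_add[symmetric] m_def d_def field_simps)
  ultimately show ?thesis
    using dt assms by (simp add: sinh_def d_def field_simps)
qed

lemma ln_ext_mean_diagonal:
  assumes "a \<noteq> b" "p \<noteq> 0"
  shows "ln (ext_mean p p (exp a) (exp b)) = unif_cgf_d1 a b p"
proof -
  define m d where "m = (a + b) / 2" and "d = (b - a) / 2"
  define X Y where "X = exp (p * a)" and "Y = exp (p * b)"
  have dp: "d * p \<noteq> 0" using assms by (simp add: d_def)
  have pw: "exp a powr p = X" "exp b powr p = Y"
    by (simp_all add: X_def Y_def powr_def mult.commute)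
  have coth: "(X * a - Y * b) / (X - Y) = m + d * (cosh (d * p) / sinh (d * p))"
  proof -
    have X: "X = exp (p * m) * (cosh (d * p) - sinh (d * p))"
      and Y: "Y = exp (p * m) * (cosh (d * p) + sinh (d * p))"
      unfolding X_def Y_def cosh_minus_sinh cosh_plus_sinh exp_add[symmetric]
      by (simp_all add: m_def d_def field_simps)
    have a: "a = m - d" and b: "b = m + d" by (simp_all add: m_def d_def field_simps)
    have "sinh (d * p) \<noteq> 0" using dp by simp
    then show ?thesis unfolding X Y a b by (simp add: field_simps)
  qed
  have "ln (ext_mean p p (exp a) (exp b)) = - 1 / p + (X * a - Y * b) / (X - Y)"
    using assms unfolding ext_mean_def pw by (simp add: ln_mult ln_div)
  also have "\<dots> = m + d * (cosh (d * p) / sinh (d * p)) - 1 / p"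
    unfolding coth by simp
  also have "\<dots> = unif_cgf_d1 a b p"
    using dp unfolding unif_cgf_d1_def m_def[symmetric] d_def[symmetric]
    by (simp add: log_sinhc_d1_def field_simps)
  finally show ?thesis .
qed

lemma ln_ext_mean_eq_divdiff:
  "ln (ext_mean p q (exp a) (exp b)) = divdiff (unif_cgf a b) (unif_cgf_d1 a b) p q"
proof (cases "a = b")
  case True
  then show ?thesis
    by (simp add: ext_mean_def divdiff_def unif_cgf_def unif_cgf_d1_def log_sinhc_def
        log_sinhc_d1_def field_simps)
next
  case ab: False
  define K where "K = unif_cgf a b"
  have pd: "exp b powr t - exp a powr t = t * (b - a) * exp (K t)" if "t \<noteq> 0" for t
    using powr_diff_eq_unif_cgf[OF ab that] by (simp add: K_def)
  have ba: "b - a \<noteq> 0" and xy: "exp a \<noteq> exp b" using ab by auto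
  consider "p \<noteq> 0" "q \<noteq> 0" "p \<noteq> q" | "p \<noteq> 0" "q = 0" | "p = 0" "q \<noteq> 0" | "p = q" "p \<noteq> 0"
    | "p = 0" "q = 0" by blast
  then show ?thesis
  proof cases
    case 1
    have "(p / q) * ((exp b powr q - exp a powr q) / (exp b powr p - exp a powr p)) = exp (K q - K p)"
      unfolding pd[OF \<open>q \<noteq> 0\<close>] pd[OF \<open>p \<noteq> 0\<close>] using ba 1 by (simp add: exp_diff field_simps)
    then show ?thesis using 1 xy by (simp add: ext_mean_def divdiff_def K_def)
  next
    case 2
    have "(1 / p) * ((exp b powr p - exp a powr p) / (ln (exp b) - ln (exp a))) = exp (K p)"
      unfolding pd[OF \<open>p \<noteq> 0\<close>] using ba 2 by (simp add: field_simps)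
    then show ?thesis using 2 xy by (simp add: ext_mean_def divdiff_def K_def)
  next
    case 3
    have "(1 / q) * ((exp b powr q - exp a powr q) / (ln (exp b) - ln (exp a))) = exp (K q)"
      unfolding pd[OF \<open>q \<noteq> 0\<close>] using ba 3 by (simp add: field_simps)
    then show ?thesis using 3 xy by (simp add: ext_mean_def divdiff_def K_def)
  next
    case 4
    then show ?thesis using ln_ext_mean_diagonal[OF ab] by (simp add: divdiff_def)
  next
    case 5
    then show ?thesis using xy
      by (simp add: ext_mean_def divdiff_def unif_cgf_d1_def log_sinhc_d1_def ln_sqrt mult_exp_exp)
  qed
qed

lemma unif_cgf_deriv: "(unif_cgf a b has_real_derivative unif_cgf_d1 a b t) (at t)"
  unfolding unif_cgf_def[abs_def] unif_cgf_d1_def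
  by (auto intro!: derivative_eq_intros DERIV_chain2[OF log_sinhc_deriv] simp: field_simps)

lemma unif_cgf_d1_deriv:
  "(unif_cgf_d1 a b has_real_derivative ((b - a) / 2)\<^sup>2 * log_sinhc_d2 ((b - a) / 2 * t)) (at t)"
  unfolding unif_cgf_d1_def[abs_def]
  by (auto intro!: derivative_eq_intros DERIV_chain2[OF log_sinhc_d1_deriv]
      simp: power2_eq_square)

lemma unif_cgf_d2_antitone_abs:
  "\<bar>u\<bar> \<le> \<bar>v\<bar> \<Longrightarrow> ((b - a) / 2)\<^sup>2 * log_sinhc_d2 ((b - a) / 2 * v)
                  \<le> ((b - a) / 2)\<^sup>2 * log_sinhc_d2 ((b - a) / 2 * u)"
  by (intro mult_left_mono log_sinhc_d2_antitone_abs) (auto simp: abs_mult mult_left_mono)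

theorem theorem5:
  fixes x y r s :: real
  assumes "x > 0" and "y > 0"
  shows "(s + r > 0 \<longrightarrow>
            convex_on {- (s + r) / 2 <..< 0} (\<lambda>w. w * ln (ext_mean (r + w) (s + w) x y)))
       \<and> (s + r < 0 \<longrightarrow>
            convex_on {0 <..< - (s + r) / 2} (\<lambda>w. w * ln (ext_mean (r + w) (s + w) x y)))"
proof -
  define a b where "a = ln x" and "b = ln y"
  have "ln (ext_mean (r + w) (s + w) x y) = divdiff (unif_cgf a b) (unif_cgf_d1 a b) (r + w) (s + w)"
    for w
    using ln_ext_mean_eq_divdiff[of "r + w" "s + w" a b] assms by (simp add: a_def b_def)
  moreover have "((b - a) / 2)\<^sup>2 * log_sinhc_d2 ((b - a) / 2 * t) \<ge> 0" for t
    by (simp add: log_sinhc_d2_nonneg)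
  note convex_shifted_divdiff[OF unif_cgf_deriv unif_cgf_d1_deriv this unif_cgf_d2_antitone_abs]
  ultimately show ?thesis by simp
qed

end
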